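(* Let $\mathcal I$ and $\mathcal J$ be ideals on $\omega$ and let $X$ be a nonempty topological space. The following are equivalent: (1) $\mathcal I\subseteq\mathcal J$; (2) for every sequence $(f_n)$ in $\mathcal C(X)$: if $f_n\to0$ $\mathcal I$-uniformly then $f_n\to0$ $\mathcal J$-$\sigma$-uniformly; (3) for every $(f_n)$ in $\mathcal C(X)$: $\mathcal I$-uniform convergence to $0$ implies $\mathcal J$-quasi-normal convergence to $0$; (4) for every $(f_n)$ in $\mathcal C(X)$: $\mathcal I$-$\sigma$-uniform convergence to $0$ implies $\mathcal J$-quasi-normal convergence to $0$; (5) for every $(f_n)$ in $\mathcal C(X)$: $\mathcal I$-$\sigma$-uniform convergence to $0$ implies $\mathcal J$-pointwise convergence to $0$; (6) for every $(f_n)$ in $\mathcal C(X)$: $\mathcal I$-uniform convergence to $0$ implies $\mathcal J$-pointwise convergence to $0$; (7) for every $(f_n)$ in $\mathcal C(X)$: $\mathcal I$-quasi-normal convergence to $0$ implies $\mathcal J$-pointwise convergence to $0$.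
   Context: An ideal on $\omega$ is a family $\mathcal I\subseteq\mathcal P(\omega)$ closed under finite unions and subsets, containing all finite sets, with $\omega\notin\mathcal I$. A real sequence $(a_n)$ is $\mathcal I$-convergent to $0$ if $\{n:|a_n|\ge\varepsilon\}\in\mathcal I$ for all $\varepsilon>0$. For a sequence $(f_n)$ of real functions on a set $X$: $\mathcal I$-pointwise convergence to $0$ means $(f_n(x))$ is $\mathcal I$-convergent to $0$ for each $x$; $\mathcal I$-uniform means $\{n:\exists x\in X\,(|f_n(x)|\ge\varepsilon)\}\in\mathcal I$ for each $\varepsilon>0$; $\mathcal I$-$\sigma$-uniform means $X=\bigcup_{k\in\omega}X_k$ with $(f_n\restriction X_k)$ $\mathcal I$-uniformly convergent to $0$ for each $k$; $\mathcal I$-quasi-normal means there is a sequence $(\varepsilon_n)$ of positive reals $\mathcal I$-convergent to $0$ with $\{n:|f_n(x)|\ge\varepsilon_n\}\in\mathcal I$ for each $x$. $\mathcal C(X)$ = continuous real functions on $X$. *)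

theory Defs
  imports "HOL-Analysis.Analysis"
begin

definition is_ideal :: "nat set set \<Rightarrow> bool" where
  "is_ideal I \<longleftrightarrow>
     (\<forall>A\<in>I. \<forall>B\<in>I. A \<union> B \<in> I) \<and>
     (\<forall>A\<in>I. \<forall>B. B \<subseteq> A \<longrightarrow> B \<in> I) \<and>
     (\<forall>A. finite A \<longrightarrow> A \<in> I) \<and>
     UNIV \<notin> I"

definition I_conv0 :: "nat set set \<Rightarrow> (nat \<Rightarrow> real) \<Rightarrow> bool" where
  "I_conv0 I a \<longleftrightarrow> (\<forall>\<epsilon>>0. {n. \<bar>a n\<bar> \<ge> \<epsilon>} \<in> I)"

definition I_pointwise0 :: "nat set set \<Rightarrow> 'a set \<Rightarrow> (nat \<Rightarrow> 'a \<Rightarrow> real) \<Rightarrow> bool" where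
  "I_pointwise0 I S f \<longleftrightarrow> (\<forall>x\<in>S. I_conv0 I (\<lambda>n. f n x))"

definition I_uniform0 :: "nat set set \<Rightarrow> 'a set \<Rightarrow> (nat \<Rightarrow> 'a \<Rightarrow> real) \<Rightarrow> bool" where
  "I_uniform0 I S f \<longleftrightarrow> (\<forall>\<epsilon>>0. {n. \<exists>x\<in>S. \<bar>f n x\<bar> \<ge> \<epsilon>} \<in> I)"

definition I_sigma_uniform0 :: "nat set set \<Rightarrow> 'a set \<Rightarrow> (nat \<Rightarrow> 'a \<Rightarrow> real) \<Rightarrow> bool" where
  "I_sigma_uniform0 I S f \<longleftrightarrow>
     (\<exists>Xk :: nat \<Rightarrow> 'a set. S = (\<Union>k. Xk k) \<and> (\<forall>k. I_uniform0 I (Xk k) f))"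

definition I_quasi_normal0 :: "nat set set \<Rightarrow> 'a set \<Rightarrow> (nat \<Rightarrow> 'a \<Rightarrow> real) \<Rightarrow> bool" where
  "I_quasi_normal0 I S f \<longleftrightarrow>
     (\<exists>eps :: nat \<Rightarrow> real. (\<forall>n. eps n > 0) \<and> I_conv0 I eps \<and>
        (\<forall>x\<in>S. {n. \<bar>f n x\<bar> \<ge> eps n} \<in> I))"

definition seq_in_C :: "'a topology \<Rightarrow> (nat \<Rightarrow> 'a \<Rightarrow> real) \<Rightarrow> bool" where
  "seq_in_C X f \<longleftrightarrow> (\<forall>n. continuous_map X euclideanreal (f n))"

end

theory Submission
  imports Defs
begin

(* Within one ideal, uniform \<Longrightarrow> \<sigma>-uniform \<Longrightarrow> quasi-normal \<Longrightarrow> pointwise convergence, and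
   each notion is monotone in the ideal; this gives every implication from I \<subseteq> J. The only real
   step is \<sigma>-uniform \<Longrightarrow> quasi-normal: for S = (\<Union>k. X k) let C m be the set of n such that
   |f n| \<ge> 1/(m+1) somewhere on X 0, ..., X (m-1). Each C m lies in the ideal, and
   \<epsilon> n = 1/(\<mu> n + 1), with \<mu> n the largest m \<le> n such that n \<notin> C m, is a witness.
   Conversely, for A \<in> I the sequence of constant functions with value 1 on A and 0 off A is
   I-uniformly convergent, and its J-pointwise convergence at any point says A \<in> J. *)

lemma is_ideal_subset: "is_ideal I \<Longrightarrow> A \<in> I \<Longrightarrow> B \<subseteq> A \<Longrightarrow> B \<in> I"
  unfolding is_ideal_def by blast

lemma is_ideal_Un: "is_ideal I \<Longrightarrow> A \<in> I \<Longrightarrow> B \<in> I \<Longrightarrow> A \<union> B \<in> I"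
  unfolding is_ideal_def by blast

lemma is_ideal_finite: "is_ideal I \<Longrightarrow> finite A \<Longrightarrow> A \<in> I"
  unfolding is_ideal_def by blast

lemma is_ideal_UN:
  assumes "is_ideal I" "finite K" "\<And>k. k \<in> K \<Longrightarrow> A k \<in> I"
  shows "(\<Union>k\<in>K. A k) \<in> I"
  using assms(2,3)
proof (induction K rule: finite_induct)
  case empty
  then show ?case using is_ideal_finite[OF assms(1)] by simp
next
  case (insert k K)
  then show ?case using is_ideal_Un[OF assms(1)] by simp
qed

lemma is_ideal_diagonal_index:
  assumes I: "is_ideal I" and C: "\<And>m. C m \<in> I" and C0: "C 0 = {}"
  obtains \<mu> :: "nat \<Rightarrow> nat" where "\<And>n. n \<notin> C (\<mu> n)" and "\<And>m. {n. \<mu> n < m} \<in> I"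
proof
  define \<mu> where "\<mu> n = (GREATEST m. m \<le> n \<and> n \<notin> C m)" for n
  have \<mu>_max: "m \<le> \<mu> n" if "m \<le> n" "n \<notin> C m" for m n
    unfolding \<mu>_def by (rule Greatest_le_nat[of _ m n]) (use that in auto)
  show "n \<notin> C (\<mu> n)" for n
  proof -
    have "\<mu> n \<le> n \<and> n \<notin> C (\<mu> n)"
      unfolding \<mu>_def by (rule GreatestI_nat[of _ 0 n]) (use C0 in auto)
    then show ?thesis ..
  qed
  show "{n. \<mu> n < m} \<in> I" for m
  proof (rule is_ideal_subset[OF I])
    show "{..<m} \<union> C m \<in> I"
      using is_ideal_Un[OF I] is_ideal_finite[OF I] C by simp
    show "{n. \<mu> n < m} \<subseteq> {..<m} \<union> C m"
    proof
      fix n assume "n \<in> {n. \<mu> n < m}"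
      then show "n \<in> {..<m} \<union> C m"
        using \<mu>_max[of m n] by (cases "m \<le> n") auto
    qed
  qed
qed

lemma I_uniform0_mono: "I \<subseteq> J \<Longrightarrow> I_uniform0 I S f \<Longrightarrow> I_uniform0 J S f"
  unfolding I_uniform0_def by blast

lemma I_sigma_uniform0_mono: "I \<subseteq> J \<Longrightarrow> I_sigma_uniform0 I S f \<Longrightarrow> I_sigma_uniform0 J S f"
  unfolding I_sigma_uniform0_def by (metis I_uniform0_mono)

lemma I_quasi_normal0_mono: "I \<subseteq> J \<Longrightarrow> I_quasi_normal0 I S f \<Longrightarrow> I_quasi_normal0 J S f"
  unfolding I_quasi_normal0_def I_conv0_def by blast

lemma I_uniform0_imp_sigma_uniform0: "I_uniform0 I S f \<Longrightarrow> I_sigma_uniform0 I S f"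
  unfolding I_sigma_uniform0_def by (rule exI[of _ "\<lambda>k. S"]) simp

lemma I_quasi_normal0_imp_pointwise0:
  assumes I: "is_ideal I" and "I_quasi_normal0 I S f"
  shows "I_pointwise0 I S f"
proof -
  obtain \<epsilon> where \<epsilon>: "I_conv0 I \<epsilon>" and small: "\<And>x. x \<in> S \<Longrightarrow> {n. \<bar>f n x\<bar> \<ge> \<epsilon> n} \<in> I"
    using assms(2) unfolding I_quasi_normal0_def by blast
  show ?thesis unfolding I_pointwise0_def I_conv0_def
  proof (intro ballI allI impI)
    fix x e assume "x \<in> S" "(e::real) > 0"
    then have "{n. \<bar>f n x\<bar> \<ge> \<epsilon> n} \<union> {n. \<bar>\<epsilon> n\<bar> \<ge> e} \<in> I"
      using is_ideal_Un[OF I] small \<epsilon> unfolding I_conv0_def by blast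
    then show "{n. \<bar>f n x\<bar> \<ge> e} \<in> I"
      by (rule is_ideal_subset[OF I]) auto
  qed
qed

lemma I_sigma_uniform0_imp_quasi_normal0:
  assumes I: "is_ideal I" and "I_sigma_uniform0 I S f"
  shows "I_quasi_normal0 I S f"
proof -
  obtain X :: "nat \<Rightarrow> 'a set" where S: "S = (\<Union>k. X k)" and unif: "\<And>k. I_uniform0 I (X k) f"
    using assms(2) unfolding I_sigma_uniform0_def by blast
  define C where "C m = (\<Union>k\<in>{..<m}. {n. \<exists>x\<in>X k. \<bar>f n x\<bar> \<ge> 1 / (real m + 1)})" for m
  have "C m \<in> I" for m
    unfolding C_def by (rule is_ideal_UN[OF I]) (use unif in \<open>auto simp: I_uniform0_def\<close>)
  moreover have "C 0 = {}"
    unfolding C_def by simp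
  ultimately obtain \<mu> where \<mu>_out: "\<And>n. n \<notin> C (\<mu> n)" and \<mu>_large: "\<And>m. {n. \<mu> n < m} \<in> I"
    using is_ideal_diagonal_index[OF I] by blast
  define \<epsilon> where "\<epsilon> n = 1 / (real (\<mu> n) + 1)" for n
  have "I_conv0 I \<epsilon>"
    unfolding I_conv0_def
  proof (intro allI impI)
    fix e :: real assume "e > 0"
    then obtain M :: nat where M: "1 / (real M + 1) < e"
      by (metis add.commute nat_approx_posE of_nat_Suc)
    have "{n. \<bar>\<epsilon> n\<bar> \<ge> e} \<subseteq> {n. \<mu> n < M}"
    proof (intro subsetI CollectI, rule ccontr)
      fix n assume "n \<in> {n. \<bar>\<epsilon> n\<bar> \<ge> e}" "\<not> \<mu> n < M"
      then have "e \<le> 1 / (real (\<mu> n) + 1)" "1 / (real (\<mu> n) + 1) \<le> 1 / (real M + 1)"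
        by (simp_all add: \<epsilon>_def frac_le)
      then show False using M by linarith
    qed
    then show "{n. \<bar>\<epsilon> n\<bar> \<ge> e} \<in> I"
      using is_ideal_subset[OF I \<mu>_large] by blast
  qed
  moreover have "{n. \<bar>f n x\<bar> \<ge> \<epsilon> n} \<in> I" if "x \<in> S" for x
  proof -
    obtain k where "x \<in> X k" using \<open>x \<in> S\<close> S by blast
    have "{n. \<bar>f n x\<bar> \<ge> \<epsilon> n} \<subseteq> {n. \<mu> n < Suc k}"
    proof (intro subsetI CollectI, rule ccontr)
      fix n assume "n \<in> {n. \<bar>f n x\<bar> \<ge> \<epsilon> n}" "\<not> \<mu> n < Suc k"
      then have "k \<in> {..<\<mu> n}" "\<bar>f n x\<bar> \<ge> 1 / (real (\<mu> n) + 1)"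
        by (auto simp: \<epsilon>_def)
      then have "n \<in> C (\<mu> n)"
        using \<open>x \<in> X k\<close> unfolding C_def by blast
      then show False using \<mu>_out by blast
    qed
    then show ?thesis
      using is_ideal_subset[OF I \<mu>_large] by blast
  qed
  moreover have "\<epsilon> n > 0" for n
    by (simp add: \<epsilon>_def)
  ultimately show ?thesis
    unfolding I_quasi_normal0_def by blast
qed

lemma I_uniform0_imp_quasi_normal0: "is_ideal I \<Longrightarrow> I_uniform0 I S f \<Longrightarrow> I_quasi_normal0 I S f"
  by (simp add: I_sigma_uniform0_imp_quasi_normal0 I_uniform0_imp_sigma_uniform0)

lemma I_sigma_uniform0_imp_pointwise0: "is_ideal I \<Longrightarrow> I_sigma_uniform0 I S f \<Longrightarrow> I_pointwise0 I S f"
  by (simp add: I_quasi_normal0_imp_pointwise0 I_sigma_uniform0_imp_quasi_normal0)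

lemma I_uniform0_imp_pointwise0: "is_ideal I \<Longrightarrow> I_uniform0 I S f \<Longrightarrow> I_pointwise0 I S f"
  by (simp add: I_sigma_uniform0_imp_pointwise0 I_uniform0_imp_sigma_uniform0)

lemma I_uniform0_indicator_seq:
  assumes "is_ideal I" "A \<in> I"
  shows "I_uniform0 I S (\<lambda>n x. of_bool (n \<in> A))"
  unfolding I_uniform0_def
  using is_ideal_subset[OF assms] by (simp add: subset_eq)

lemma I_pointwise0_indicator_seq_imp_mem:
  assumes "I_pointwise0 J S (\<lambda>n x. of_bool (n \<in> A))" and "x \<in> S"
  shows "A \<in> J"
proof -
  have "I_conv0 J (\<lambda>n. of_bool (n \<in> A))"
    using assms unfolding I_pointwise0_def by blast
  then have "{n. \<bar>of_bool (n \<in> A)\<bar> \<ge> (1::real)} \<in> J"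
    unfolding I_conv0_def by (metis zero_less_one)
  moreover have "{n. \<bar>of_bool (n \<in> A)\<bar> \<ge> (1::real)} = A"
    by auto
  ultimately show ?thesis by simp
qed

lemma ideal_subset_if_uniform_imp_pointwise:
  assumes I: "is_ideal I" and "topspace X \<noteq> {}"
    and unif_pw: "\<And>f. seq_in_C X f \<Longrightarrow> I_uniform0 I (topspace X) f \<Longrightarrow> I_pointwise0 J (topspace X) f"
  shows "I \<subseteq> J"
proof
  fix A assume "A \<in> I"
  have "seq_in_C X (\<lambda>n x. of_bool (n \<in> A))"
    unfolding seq_in_C_def by simp
  then have "I_pointwise0 J (topspace X) (\<lambda>n x. of_bool (n \<in> A))"
    using unif_pw I_uniform0_indicator_seq[OF I \<open>A \<in> I\<close>] by blast
  moreover obtain x where "x \<in> topspace X"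
    using \<open>topspace X \<noteq> {}\<close> by blast
  ultimately show "A \<in> J"
    by (rule I_pointwise0_indicator_seq_imp_mem)
qed

lemma ideal_subset_iff_convergence_imp:
  fixes P Q :: "nat set set \<Rightarrow> 'a set \<Rightarrow> (nat \<Rightarrow> 'a \<Rightarrow> real) \<Rightarrow> bool"
  assumes I: "is_ideal I" and "topspace X \<noteq> {}"
    and unif_P: "\<And>S f. I_uniform0 I S f \<Longrightarrow> P I S f"
    and P_mono: "\<And>S f. I \<subseteq> J \<Longrightarrow> P I S f \<Longrightarrow> P J S f"
    and P_Q: "\<And>S f. P J S f \<Longrightarrow> Q J S f"
    and Q_pw: "\<And>S f. Q J S f \<Longrightarrow> I_pointwise0 J S f"
  shows "I \<subseteq> J \<longleftrightarrow>
    (\<forall>f. seq_in_C X f \<longrightarrow> P I (topspace X) f \<longrightarrow> Q J (topspace X) f)"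
  using ideal_subset_if_uniform_imp_pointwise[OF I \<open>topspace X \<noteq> {}\<close>] assms(3-6) by blast

theorem proposition3p2:
  fixes I J :: "nat set set" and X :: "'a topology"
  assumes "is_ideal I" and "is_ideal J" and "topspace X \<noteq> {}"
  shows
   "(I \<subseteq> J \<longleftrightarrow>
      (\<forall>f. seq_in_C X f \<longrightarrow> I_uniform0 I (topspace X) f \<longrightarrow> I_sigma_uniform0 J (topspace X) f))
  \<and> (I \<subseteq> J \<longleftrightarrow>
      (\<forall>f. seq_in_C X f \<longrightarrow> I_uniform0 I (topspace X) f \<longrightarrow> I_quasi_normal0 J (topspace X) f))
  \<and> (I \<subseteq> J \<longleftrightarrow>
      (\<forall>f. seq_in_C X f \<longrightarrow> I_sigma_uniform0 I (topspace X) f \<longrightarrow> I_quasi_normal0 J (topspace X) f))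
  \<and> (I \<subseteq> J \<longleftrightarrow>
      (\<forall>f. seq_in_C X f \<longrightarrow> I_sigma_uniform0 I (topspace X) f \<longrightarrow> I_pointwise0 J (topspace X) f))
  \<and> (I \<subseteq> J \<longleftrightarrow>
      (\<forall>f. seq_in_C X f \<longrightarrow> I_uniform0 I (topspace X) f \<longrightarrow> I_pointwise0 J (topspace X) f))
  \<and> (I \<subseteq> J \<longleftrightarrow>
      (\<forall>f. seq_in_C X f \<longrightarrow> I_quasi_normal0 I (topspace X) f \<longrightarrow> I_pointwise0 J (topspace X) f))"
proof -
  note iff = ideal_subset_iff_convergence_imp[OF assms(1,3)]
  show ?thesis
    by (intro conjI
        iff[where P = I_uniform0 and Q = I_sigma_uniform0]
        iff[where P = I_uniform0 and Q = I_quasi_normal0]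
        iff[where P = I_sigma_uniform0 and Q = I_quasi_normal0]
        iff[where P = I_sigma_uniform0 and Q = I_pointwise0]
        iff[where P = I_uniform0 and Q = I_pointwise0]
        iff[where P = I_quasi_normal0 and Q = I_pointwise0])
      (assumption | erule I_uniform0_mono I_sigma_uniform0_mono I_quasi_normal0_mono
        I_uniform0_imp_sigma_uniform0 I_uniform0_imp_quasi_normal0[OF assms(1)]
        I_sigma_uniform0_imp_quasi_normal0[OF assms(2)] I_uniform0_imp_quasi_normal0[OF assms(2)]
        I_quasi_normal0_imp_pointwise0[OF assms(2)] I_sigma_uniform0_imp_pointwise0[OF assms(2)]
        I_uniform0_imp_pointwise0[OF assms(2)])+
qed

end
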